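(* Let $h,h_*$ be functions of $x$, let $\epsilon\ge0$, and let $f_h$ be a test function with $\|f_h-T(h_*-h)\|_2\le\epsilon$ and $\|f_h\|_2>0$. Let $\Psi(h,f)=\mathbb E[(y-h(x))f(z)]$. Then $$\frac1{\|f_h\|_2}\big(\Psi(h,f_h)-\Psi(h_*,f_h)\big)\ge\|T(h-h_* )\|_2-2\epsilon.$$
   Context: $(y,x,z)$ is a random vector; $(Th)(z)=\mathbb E[h(x)\mid z]$ and $\|\cdot\|_2$ is the population $L^2$ norm. *)

theory Defs
  imports "HOL-Probability.Probability"
begin

definition L2norm :: "'a measure \<Rightarrow> ('a \<Rightarrow> real) \<Rightarrow> real" where
  "L2norm M g = sqrt (\<integral>\<omega>. (g \<omega>)\<^sup>2 \<partial>M)"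

text \<open>The operator T: (T h)(z) = E[h(x) | z], realised as the conditional
  expectation of h(x) with respect to the sigma-algebra generated by z
  (z takes values in the measurable space N).\<close>
definition Top :: "'a measure \<Rightarrow> ('a \<Rightarrow> 'b) \<Rightarrow> ('a \<Rightarrow> 'c) \<Rightarrow> 'c measure \<Rightarrow> ('b \<Rightarrow> real) \<Rightarrow> ('a \<Rightarrow> real)" where
  "Top M x z N h = real_cond_exp M (vimage_algebra (space M) z N) (\<lambda>\<omega>. h (x \<omega>))"

definition Psi :: "'a measure \<Rightarrow> ('a \<Rightarrow> real) \<Rightarrow> ('a \<Rightarrow> 'b) \<Rightarrow> ('a \<Rightarrow> 'c) \<Rightarrow> ('b \<Rightarrow> real) \<Rightarrow> ('c \<Rightarrow> real) \<Rightarrow> real" where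
  "Psi M y x z h f = (\<integral>\<omega>. (y \<omega> - h (x \<omega>)) * f (z \<omega>) \<partial>M)"

end

theory Submission
  imports Defs
begin

text \<open>Write \<open>f = f\<^sub>h(z)\<close> and \<open>G = T(h\<^sub>* - h)\<close>. By the tower property
  \<open>\<Psi>(h,f\<^sub>h) - \<Psi>(h\<^sub>*,f\<^sub>h) = E[f (h\<^sub>* - h)(x)] = E[f G]\<close>, and by linearity of \<open>T\<close>
  \<open>\<parallel>T(h - h\<^sub>*)\<parallel> = \<parallel>G\<parallel>\<close>. Cauchy-Schwarz gives
  \<open>E[f G] = \<parallel>f\<parallel>\<^sup>2 - E[f (f - G)] \<ge> \<parallel>f\<parallel> (\<parallel>f\<parallel> - \<parallel>f - G\<parallel>)\<close>, and the triangle inequality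
  \<open>\<parallel>G\<parallel> \<le> \<parallel>f\<parallel> + \<parallel>f - G\<parallel>\<close> finishes the estimate.\<close>

lemma quadratic_nonneg_imp_discriminant_le:
  fixes a b c :: real
  assumes nonneg: "\<And>t. 0 \<le> t\<^sup>2 * a - 2 * t * b + c" and "a \<ge> 0"
  shows "b\<^sup>2 \<le> a * c"
proof (cases "a = 0")
  case True
  show ?thesis
  proof (rule ccontr)
    assume "\<not> ?thesis"
    with True have "b \<noteq> 0" by simp
    have "0 \<le> ((c + 1) / (2 * b))\<^sup>2 * a - 2 * ((c + 1) / (2 * b)) * b + c" by (rule nonneg)
    also have "\<dots> = -1" using True \<open>b \<noteq> 0\<close> by (simp add: field_simps)
    finally show False by simp
  qed
next
  case False
  with \<open>a \<ge> 0\<close> have "a > 0" by simp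
  have "0 \<le> (b / a)\<^sup>2 * a - 2 * (b / a) * b + c" by (rule nonneg)
  also have "\<dots> = c - b\<^sup>2 / a" using \<open>a > 0\<close> by (simp add: field_simps power2_eq_square)
  finally show ?thesis using \<open>a > 0\<close> by (simp add: field_simps)
qed

lemma integrable_mult_of_square_integrable:
  fixes f g :: "'a \<Rightarrow> real"
  assumes [measurable]: "f \<in> borel_measurable M" "g \<in> borel_measurable M"
    and "integrable M (\<lambda>x. (f x)\<^sup>2)" "integrable M (\<lambda>x. (g x)\<^sup>2)"
  shows "integrable M (\<lambda>x. f x * g x)"
proof (rule Bochner_Integration.integrable_bound[where f="\<lambda>x. (f x)\<^sup>2 + (g x)\<^sup>2"])
  show "integrable M (\<lambda>x. (f x)\<^sup>2 + (g x)\<^sup>2)" using assms by simp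
  have "\<bar>f x * g x\<bar> \<le> (f x)\<^sup>2 + (g x)\<^sup>2" for x
    using sum_squares_bound[of "\<bar>f x\<bar>" "\<bar>g x\<bar>"]
      mult_nonneg_nonneg[OF abs_ge_zero[of "f x"] abs_ge_zero[of "g x"]]
    by (simp only: abs_mult power2_abs)
  then show "AE x in M. norm (f x * g x) \<le> norm ((f x)\<^sup>2 + (g x)\<^sup>2)" by simp
qed simp

lemma integrable_square_diff:
  fixes f g :: "'a \<Rightarrow> real"
  assumes [measurable]: "f \<in> borel_measurable M" "g \<in> borel_measurable M"
    and "integrable M (\<lambda>x. (f x)\<^sup>2)" "integrable M (\<lambda>x. (g x)\<^sup>2)"
  shows "integrable M (\<lambda>x. (f x - g x)\<^sup>2)"
proof -
  have "integrable M (\<lambda>x. f x * g x)"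
    using assms by (intro integrable_mult_of_square_integrable)
  then have "integrable M (\<lambda>x. (f x)\<^sup>2 - 2 * (f x * g x) + (g x)\<^sup>2)" using assms by simp
  then show ?thesis by (simp add: power2_diff algebra_simps)
qed

lemma L2norm_nonneg: "0 \<le> L2norm M f"
  by (simp add: L2norm_def)

lemma L2norm_square: "(L2norm M f)\<^sup>2 = (\<integral>x. (f x)\<^sup>2 \<partial>M)"
  by (simp add: L2norm_def)

lemma L2norm_cong_AE:
  assumes "f \<in> borel_measurable M" "g \<in> borel_measurable M" "AE x in M. f x = g x"
  shows "L2norm M f = L2norm M g"
proof -
  have "(\<integral>x. (f x)\<^sup>2 \<partial>M) = (\<integral>x. (g x)\<^sup>2 \<partial>M)"
    using assms by (intro integral_cong_AE) auto
  then show ?thesis by (simp add: L2norm_def)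
qed

lemma L2norm_Cauchy_Schwarz:
  fixes f g :: "'a \<Rightarrow> real"
  assumes [measurable]: "f \<in> borel_measurable M" "g \<in> borel_measurable M"
    and "integrable M (\<lambda>x. (f x)\<^sup>2)" "integrable M (\<lambda>x. (g x)\<^sup>2)"
  shows "\<bar>\<integral>x. f x * g x \<partial>M\<bar> \<le> L2norm M f * L2norm M g"
proof -
  have "integrable M (\<lambda>x. f x * g x)"
    using assms by (intro integrable_mult_of_square_integrable)
  let ?A = "\<integral>x. (f x)\<^sup>2 \<partial>M" and ?B = "\<integral>x. (g x)\<^sup>2 \<partial>M" and ?S = "\<integral>x. f x * g x \<partial>M"
  have "?S\<^sup>2 \<le> ?A * ?B"
  proof (rule quadratic_nonneg_imp_discriminant_le)
    fix t :: real
    have "0 \<le> (\<integral>x. (t * f x - g x)\<^sup>2 \<partial>M)" by simp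
    also have "\<dots> = (\<integral>x. t\<^sup>2 * (f x)\<^sup>2 - 2 * t * (f x * g x) + (g x)\<^sup>2 \<partial>M)"
      by (rule Bochner_Integration.integral_cong) (auto simp: power2_diff power_mult_distrib)
    also have "\<dots> = t\<^sup>2 * ?A - 2 * t * ?S + ?B"
      using assms \<open>integrable M (\<lambda>x. f x * g x)\<close> by simp
    finally show "0 \<le> t\<^sup>2 * ?A - 2 * t * ?S + ?B" .
  qed simp
  then have "sqrt (?S\<^sup>2) \<le> sqrt (?A * ?B)" by (rule real_sqrt_le_mono)
  then show ?thesis by (simp add: L2norm_def real_sqrt_mult)
qed

lemma L2norm_diff_le:
  fixes f g :: "'a \<Rightarrow> real"
  assumes [measurable]: "f \<in> borel_measurable M" "g \<in> borel_measurable M"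
    and "integrable M (\<lambda>x. (f x)\<^sup>2)" "integrable M (\<lambda>x. (g x)\<^sup>2)"
  shows "L2norm M (\<lambda>x. f x - g x) \<le> L2norm M f + L2norm M g"
proof -
  have "integrable M (\<lambda>x. f x * g x)"
    using assms by (intro integrable_mult_of_square_integrable)
  have "(L2norm M (\<lambda>x. f x - g x))\<^sup>2
      = (\<integral>x. (f x)\<^sup>2 - 2 * (f x * g x) + (g x)\<^sup>2 \<partial>M)"
    unfolding L2norm_square
    by (intro Bochner_Integration.integral_cong) (auto simp: power2_diff)
  also have "\<dots> = (L2norm M f)\<^sup>2 - 2 * (\<integral>x. f x * g x \<partial>M) + (L2norm M g)\<^sup>2"
    using assms \<open>integrable M (\<lambda>x. f x * g x)\<close> by (simp add: L2norm_square)
  also have "\<dots> \<le> (L2norm M f + L2norm M g)\<^sup>2"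
    using L2norm_Cauchy_Schwarz[OF assms] by (simp add: power2_sum abs_le_iff)
  finally show ?thesis
    using L2norm_nonneg by (meson add_nonneg_nonneg power2_le_imp_le)
qed

lemma integral_mult_div_L2norm_ge:
  fixes f g :: "'a \<Rightarrow> real"
  assumes [measurable]: "f \<in> borel_measurable M" "g \<in> borel_measurable M"
    and f2: "integrable M (\<lambda>x. (f x)\<^sup>2)" and "integrable M (\<lambda>x. (g x)\<^sup>2)"
    and pos: "L2norm M f > 0"
  shows "(\<integral>x. f x * g x \<partial>M) / L2norm M f \<ge> L2norm M g - 2 * L2norm M (\<lambda>x. f x - g x)"
proof -
  define A where "A = L2norm M f"
  define D where "D = L2norm M (\<lambda>x. f x - g x)"
  have d2: "integrable M (\<lambda>x. (f x - g x)\<^sup>2)"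
    using assms by (intro integrable_square_diff)
  have "integrable M (\<lambda>x. f x * (f x - g x))"
    using f2 d2 by (intro integrable_mult_of_square_integrable) auto
  have "(\<integral>x. f x * g x \<partial>M) = (\<integral>x. (f x)\<^sup>2 - f x * (f x - g x) \<partial>M)"
    by (rule Bochner_Integration.integral_cong) (auto simp: algebra_simps power2_eq_square)
  also have "\<dots> = A\<^sup>2 - (\<integral>x. f x * (f x - g x) \<partial>M)"
    using f2 \<open>integrable M (\<lambda>x. f x * (f x - g x))\<close> by (simp add: A_def L2norm_square)
  also have "\<dots> \<ge> A\<^sup>2 - A * D"
    using L2norm_Cauchy_Schwarz[of f M "\<lambda>x. f x - g x"] f2 d2 by (simp add: A_def D_def)
  finally have "(\<integral>x. f x * g x \<partial>M) / A \<ge> A - D"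
    using pos by (simp add: A_def field_simps power2_eq_square)
  moreover have "L2norm M g \<le> A + D"
    using L2norm_diff_le[of f M "\<lambda>x. f x - g x"] f2 d2 by (simp add: A_def D_def)
  ultimately show ?thesis by (simp add: A_def D_def)
qed

lemma subalgebra_vimage_algebra:
  assumes "z \<in> measurable M N"
  shows "subalgebra M (vimage_algebra (space M) z N)"
  unfolding subalgebra_def using sets_image_in_sets[OF refl assms] by auto

context finite_measure
begin

lemma finite_measure_subalgebra_vimage_algebra:
  assumes "z \<in> measurable M N"
  shows "finite_measure_subalgebra M (vimage_algebra (space M) z N)"
  by unfold_locales (rule subalgebra_vimage_algebra[OF assms])

lemma square_integrable_Top:
  assumes [measurable]: "x \<in> measurable M X" "g \<in> borel_measurable X"
    and "z \<in> measurable M N" "integrable M (\<lambda>\<omega>. (g (x \<omega>))\<^sup>2)"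
  shows "integrable M (\<lambda>\<omega>. (Top M x z N g \<omega>)\<^sup>2)"
proof -
  interpret finite_measure_subalgebra M "vimage_algebra (space M) z N"
    using finite_measure_subalgebra_vimage_algebra[OF assms(3)] .
  have "integrable M (\<lambda>\<omega>. g (x \<omega>))"
    by (rule square_integrable_imp_integrable[OF _ assms(4)]) measurable
  then show ?thesis
    unfolding Top_def
    by (rule integrable_convex_cond_exp[where I=UNIV and q="\<lambda>t. t\<^sup>2"])
       (use assms(4) convex_power2 in auto)
qed

lemma integral_mult_Top:
  assumes "z \<in> measurable M N" "f \<in> borel_measurable N"
    and [measurable]: "x \<in> measurable M X" "g \<in> borel_measurable X"
    and "integrable M (\<lambda>\<omega>. f (z \<omega>) * g (x \<omega>))"
  shows "(\<integral>\<omega>. f (z \<omega>) * Top M x z N g \<omega> \<partial>M) = (\<integral>\<omega>. f (z \<omega>) * g (x \<omega>) \<partial>M)"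
proof -
  interpret finite_measure_subalgebra M "vimage_algebra (space M) z N"
    using finite_measure_subalgebra_vimage_algebra[OF assms(1)] .
  have "z \<in> measurable (vimage_algebra (space M) z N) N"
    using assms(1) by (intro measurable_vimage_algebra1) (auto simp: measurable_def)
  then have "(\<lambda>\<omega>. f (z \<omega>)) \<in> borel_measurable (vimage_algebra (space M) z N)"
    using assms(2) by measurable
  then show ?thesis
    unfolding Top_def using assms(5) by (intro real_cond_exp_intg(2)) auto
qed

lemma L2norm_Top_uminus:
  assumes "z \<in> measurable M N" "integrable M (\<lambda>\<omega>. g (x \<omega>))"
  shows "L2norm M (Top M x z N (\<lambda>v. - g v)) = L2norm M (Top M x z N g)"
proof -
  interpret finite_measure_subalgebra M "vimage_algebra (space M) z N"
    using finite_measure_subalgebra_vimage_algebra[OF assms(1)] .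
  have "L2norm M (Top M x z N (\<lambda>v. - g v)) = L2norm M (\<lambda>\<omega>. -1 * Top M x z N g \<omega>)"
    unfolding Top_def using real_cond_exp_cmult[OF assms(2), of "-1"]
    by (intro L2norm_cong_AE) auto
  then show ?thesis by (simp add: L2norm_def)
qed

end

lemma Psi_diff:
  assumes "integrable M (\<lambda>\<omega>. (y \<omega> - h (x \<omega>)) * f (z \<omega>))"
    and "integrable M (\<lambda>\<omega>. (y \<omega> - g (x \<omega>)) * f (z \<omega>))"
  shows "Psi M y x z h f - Psi M y x z g f = (\<integral>\<omega>. f (z \<omega>) * (g (x \<omega>) - h (x \<omega>)) \<partial>M)"
proof -
  have "Psi M y x z h f - Psi M y x z g f
      = (\<integral>\<omega>. (y \<omega> - h (x \<omega>)) * f (z \<omega>) - (y \<omega> - g (x \<omega>)) * f (z \<omega>) \<partial>M)"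
    unfolding Psi_def using assms by (rule Bochner_Integration.integral_diff[symmetric])
  also have "\<dots> = (\<integral>\<omega>. f (z \<omega>) * (g (x \<omega>) - h (x \<omega>)) \<partial>M)"
    by (rule Bochner_Integration.integral_cong) (auto simp: algebra_simps)
  finally show ?thesis .
qed

lemma (in finite_measure) Psi_diff_eq_integral_mult_Top:
  assumes [measurable]: "x \<in> measurable M X" "z \<in> measurable M N" "y \<in> borel_measurable M"
    "h \<in> borel_measurable X" "g \<in> borel_measurable X" "f \<in> borel_measurable N"
    and "integrable M (\<lambda>\<omega>. (y \<omega>)\<^sup>2)" "integrable M (\<lambda>\<omega>. (h (x \<omega>))\<^sup>2)"
    "integrable M (\<lambda>\<omega>. (g (x \<omega>))\<^sup>2)" "integrable M (\<lambda>\<omega>. (f (z \<omega>))\<^sup>2)"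
  shows "Psi M y x z h f - Psi M y x z g f
    = (\<integral>\<omega>. f (z \<omega>) * Top M x z N (\<lambda>v. g v - h v) \<omega> \<partial>M)"
proof -
  have residual: "integrable M (\<lambda>\<omega>. (y \<omega> - k (x \<omega>)) * f (z \<omega>))"
    if [measurable]: "k \<in> borel_measurable X" and "integrable M (\<lambda>\<omega>. (k (x \<omega>))\<^sup>2)" for k
    using assms(7,10) that(2)
    by (intro integrable_mult_of_square_integrable integrable_square_diff) measurable
  have "integrable M (\<lambda>\<omega>. (g (x \<omega>) - h (x \<omega>))\<^sup>2)"
    using assms(8,9) by (intro integrable_square_diff) measurable
  then have product: "integrable M (\<lambda>\<omega>. f (z \<omega>) * (g (x \<omega>) - h (x \<omega>)))"
    using assms(10) by (intro integrable_mult_of_square_integrable) measurable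
  have "Psi M y x z h f - Psi M y x z g f = (\<integral>\<omega>. f (z \<omega>) * (g (x \<omega>) - h (x \<omega>)) \<partial>M)"
    using assms(8,9) by (intro Psi_diff residual) measurable
  also have "\<dots> = (\<integral>\<omega>. f (z \<omega>) * Top M x z N (\<lambda>v. g v - h v) \<omega> \<partial>M)"
    using product by (intro integral_mult_Top[symmetric]) measurable
  finally show ?thesis .
qed

theorem lemma4:
  fixes M :: "'a measure" and X :: "'b measure" and N :: "'c measure"
    and y :: "'a \<Rightarrow> real" and x :: "'a \<Rightarrow> 'b" and z :: "'a \<Rightarrow> 'c"
    and h hs :: "'b \<Rightarrow> real" and fh :: "'c \<Rightarrow> real" and \<epsilon> :: real
  assumes "prob_space M"
    and "x \<in> measurable M X" and "z \<in> measurable M N"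
    and "y \<in> borel_measurable M" and "integrable M (\<lambda>\<omega>. (y \<omega>)\<^sup>2)"
    and "h \<in> borel_measurable X" and "integrable M (\<lambda>\<omega>. (h (x \<omega>))\<^sup>2)"
    and "hs \<in> borel_measurable X" and "integrable M (\<lambda>\<omega>. (hs (x \<omega>))\<^sup>2)"
    and "fh \<in> borel_measurable N" and "integrable M (\<lambda>\<omega>. (fh (z \<omega>))\<^sup>2)"
    and "\<epsilon> \<ge> 0"
    and "L2norm M (\<lambda>\<omega>. fh (z \<omega>) - Top M x z N (\<lambda>v. hs v - h v) \<omega>) \<le> \<epsilon>"
    and "L2norm M (\<lambda>\<omega>. fh (z \<omega>)) > 0"
  shows "(Psi M y x z h fh - Psi M y x z hs fh) / L2norm M (\<lambda>\<omega>. fh (z \<omega>))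
           \<ge> L2norm M (Top M x z N (\<lambda>v. h v - hs v)) - 2 * \<epsilon>"
proof -
  note [measurable] = assms(2-4,6,8,10)
  interpret prob_space M by fact
  define f where "f = (\<lambda>\<omega>. fh (z \<omega>))"
  define G where "G = Top M x z N (\<lambda>v. hs v - h v)"
  have [measurable]: "f \<in> borel_measurable M" "G \<in> borel_measurable M"
    unfolding f_def G_def Top_def by measurable
  have d2: "integrable M (\<lambda>\<omega>. (hs (x \<omega>) - h (x \<omega>))\<^sup>2)"
    using assms(7,9) by (intro integrable_square_diff) measurable
  have Psi_gap: "Psi M y x z h fh - Psi M y x z hs fh = (\<integral>\<omega>. f \<omega> * G \<omega> \<partial>M)"
    unfolding f_def G_def using assms(5,7,9,11) by (intro Psi_diff_eq_integral_mult_Top) measurable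
  have "integrable M (\<lambda>\<omega>. hs (x \<omega>) - h (x \<omega>))"
    by (rule square_integrable_imp_integrable[OF _ d2]) measurable
  then have "L2norm M (Top M x z N (\<lambda>v. h v - hs v)) = L2norm M G"
    using L2norm_Top_uminus[OF assms(3), of "\<lambda>v. hs v - h v" x] by (simp add: G_def)
  moreover have "L2norm M (\<lambda>\<omega>. f \<omega> - G \<omega>) \<le> \<epsilon>"
    using assms(13) by (simp add: f_def G_def)
  moreover have "integrable M (\<lambda>\<omega>. (G \<omega>)\<^sup>2)"
    unfolding G_def using d2 by (intro square_integrable_Top[OF assms(2) _ assms(3)]) measurable
  then have "(\<integral>\<omega>. f \<omega> * G \<omega> \<partial>M) / L2norm M f
      \<ge> L2norm M G - 2 * L2norm M (\<lambda>\<omega>. f \<omega> - G \<omega>)"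
    using assms(11,14) unfolding f_def by (intro integral_mult_div_L2norm_ge) measurable
  ultimately show ?thesis
    unfolding Psi_gap f_def[symmetric] by linarith
qed

end
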